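(* Let $X$ be a compact metric space and $f\colon X\to X$ continuous. If $(X,f)$ has two-sided cofinal orbital shadowing, then it has property $P_a$.
   Context: $d_H$ is the Hausdorff metric. A full trajectory is $\langle z_i\rangle_{i\in\mathbb Z}$ with $f(z_i)=z_{i+1}$. For two-sided sequences, $\omega(\langle x_i\rangle)=\bigcap_{M}\overline{\{x_n:n>M\}}$, $\alpha(\langle x_i\rangle)=\bigcap_{M}\overline{\{x_n:n<-M\}}$. $ICT_f$ is the set of nonempty closed internally chain transitive sets ($A$ is internally chain transitive if for all $a,b\in A$ and $\delta>0$ there exist $x_0=a,\dots,x_N=b$ in $A$, $N\ge1$, with $d(f(x_i),x_{i+1})<\delta$). Property $P_a$: for every $A\in ICT_f$ and $\epsilon>0$ there is a full trajectory $\langle x_i\rangle$ with $d_H(\alpha(\langle x_i\rangle),A)<\epsilon$ and $d_H(\omega(\langle x_i\rangle),A)<\epsilon$. A two-sided $\delta$-pseudo-orbit is $\langle x_i\rangle_{i\in\mathbb Z}$ with $d(f(x_i),x_{i+1})<\delta$ for all $i$. Two-sided cofinal orbital shadowing: for every $\epsilon>0$ there is $\delta>0$ such that for every two-sided $\delta$-pseudo-orbit $\langle x_i\rangle$ there is a full trajectory $\langle z_i\rangle$ such that for every $K\in\mathbb N$ there is $N\ge K$ with $d_H(\overline{\{z_{N+i}\}_{i\ge0}},\overline{\{x_{N+i}\}_{i\ge0}})<\epsilon$ and $d_H(\overline{\{z_{i-N}\}_{i\le0}},\overline{\{x_{i-N}\}_{i\le0}})<\epsilon$. *)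

theory Defs
  imports "HOL-Analysis.Analysis"
begin

definition hausdorff_dist :: "'a::metric_space set \<Rightarrow> 'a set \<Rightarrow> real" where
  "hausdorff_dist A B = max (SUP a\<in>A. infdist a B) (SUP b\<in>B. infdist b A)"

definition full_trajectory :: "'a set \<Rightarrow> ('a \<Rightarrow> 'a) \<Rightarrow> (int \<Rightarrow> 'a) \<Rightarrow> bool" where
  "full_trajectory X f z \<longleftrightarrow> (\<forall>i. z i \<in> X \<and> f (z i) = z (i + 1))"

definition omega_set :: "(int \<Rightarrow> 'a::topological_space) \<Rightarrow> 'a set" where
  "omega_set x = (\<Inter>M. closure {x n | n. n > M})"

definition alpha_set :: "(int \<Rightarrow> 'a::topological_space) \<Rightarrow> 'a set" where
  "alpha_set x = (\<Inter>M. closure {x n | n. n < - M})"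

definition internally_chain_transitive :: "('a::metric_space \<Rightarrow> 'a) \<Rightarrow> 'a set \<Rightarrow> bool" where
  "internally_chain_transitive f A \<longleftrightarrow>
     (\<forall>a\<in>A. \<forall>b\<in>A. \<forall>\<delta>>0. \<exists>N::nat. \<exists>x::nat \<Rightarrow> 'a. N \<ge> 1 \<and> x 0 = a \<and> x N = b \<and>
        (\<forall>i\<le>N. x i \<in> A) \<and> (\<forall>i<N. dist (f (x i)) (x (Suc i)) < \<delta>))"

definition ICT :: "'a::metric_space set \<Rightarrow> ('a \<Rightarrow> 'a) \<Rightarrow> 'a set set" where
  "ICT X f = {A. A \<subseteq> X \<and> A \<noteq> {} \<and> closed A \<and> internally_chain_transitive f A}"

definition property_Pa :: "'a::metric_space set \<Rightarrow> ('a \<Rightarrow> 'a) \<Rightarrow> bool" where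
  "property_Pa X f \<longleftrightarrow>
     (\<forall>A\<in>ICT X f. \<forall>\<epsilon>>0. \<exists>x. full_trajectory X f x \<and>
        hausdorff_dist (alpha_set x) A < \<epsilon> \<and> hausdorff_dist (omega_set x) A < \<epsilon>)"

definition two_sided_pseudo_orbit :: "'a::metric_space set \<Rightarrow> ('a \<Rightarrow> 'a) \<Rightarrow> real \<Rightarrow> (int \<Rightarrow> 'a) \<Rightarrow> bool" where
  "two_sided_pseudo_orbit X f \<delta> x \<longleftrightarrow> (\<forall>i. x i \<in> X \<and> dist (f (x i)) (x (i + 1)) < \<delta>)"

definition two_sided_cofinal_orbital_shadowing :: "'a::metric_space set \<Rightarrow> ('a \<Rightarrow> 'a) \<Rightarrow> bool" where
  "two_sided_cofinal_orbital_shadowing X f \<longleftrightarrow>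
     (\<forall>\<epsilon>>0. \<exists>\<delta>>0. \<forall>x. two_sided_pseudo_orbit X f \<delta> x \<longrightarrow>
        (\<exists>z. full_trajectory X f z \<and>
          (\<forall>K::nat. \<exists>N::nat. N \<ge> K \<and>
             hausdorff_dist (closure {z (int N + int i) | i::nat. True})
                            (closure {x (int N + int i) | i::nat. True}) < \<epsilon> \<and>
             hausdorff_dist (closure {z (- int i - int N) | i::nat. True})
                            (closure {x (- int i - int N) | i::nat. True}) < \<epsilon>)))"

end

theory Submission
  imports Defs
begin

text \<open>
  Internal chain transitivity lets us run a closed \<open>\<delta>\<close>-chain
  in A through a finite \<open>\<epsilon>/4\<close>-net of A; repeating it periodically gives a two-sided
  \<open>\<delta>\<close>-pseudo-orbit in A that returns \<open>\<epsilon>/4\<close>-close to every point of A infinitely often,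
  forwards and backwards. Let z be a full trajectory shadowing it cofinally within \<open>\<epsilon>/2\<close>.
  Every point of the \<open>\<omega>\<close>-limit set of z lies in the closure of arbitrarily late tails of z,
  hence \<open>\<epsilon>/2\<close>-close to A; conversely every point of A is \<open>3\<epsilon>/4\<close>-close to points of
  arbitrarily late tails of z, hence, by compactness of X, to a point of the limit set.
  The same holds for the \<open>\<alpha>\<close>-limit set.
\<close>

lemma infdist_less_iff: "A \<noteq> {} \<Longrightarrow> infdist x A < e \<longleftrightarrow> (\<exists>a\<in>A. dist x a < e)"
  unfolding infdist_notempty by (intro cINF_less_iff) (auto intro: bdd_belowI[of _ 0])

lemma infdist_closure: "infdist x (closure A) = infdist x A"
  by (simp add: infdist_eq_setdist)

lemma bdd_above_infdist_image:
  assumes "bounded P"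
  shows "bdd_above ((\<lambda>p. infdist p Q) ` P)"
proof (cases "Q = {}")
  case True
  then show ?thesis by (auto simp: infdist_def intro: bdd_aboveI[of _ 0])
next
  case False
  then obtain q where "q \<in> Q" by blast
  obtain B where "\<forall>p\<in>P. dist q p \<le> B"
    using assms bounded_any_center by blast
  then have "\<forall>p\<in>P. infdist p Q \<le> B"
    by (metis \<open>q \<in> Q\<close> dist_commute infdist_le2)
  then show ?thesis by (auto intro: bdd_aboveI)
qed

lemma hausdorff_dist_commute: "hausdorff_dist P Q = hausdorff_dist Q P"
  unfolding hausdorff_dist_def by (rule max.commute)

lemma infdist_le_hausdorff_dist:
  assumes "bounded P" "p \<in> P"
  shows "infdist p Q \<le> hausdorff_dist P Q"
  unfolding hausdorff_dist_def
  using cSUP_upper[OF assms(2) bdd_above_infdist_image[OF assms(1), of Q]] by linarith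

lemma hausdorff_dist_le:
  assumes "P \<noteq> {}" "Q \<noteq> {}" "\<And>p. p \<in> P \<Longrightarrow> infdist p Q \<le> e" "\<And>q. q \<in> Q \<Longrightarrow> infdist q P \<le> e"
  shows "hausdorff_dist P Q \<le> e"
  unfolding hausdorff_dist_def using assms by (auto intro!: cSUP_least)

definition limit_set :: "(nat \<Rightarrow> 'a::topological_space) \<Rightarrow> 'a set" where
  "limit_set v = (\<Inter>M. closure (v ` {M..}))"

lemma INT_closure_cofinal_eq:
  assumes "\<And>i. \<exists>j. G j \<subseteq> F i" and "\<And>j. \<exists>i. F i \<subseteq> G j"
  shows "(\<Inter>i. closure (F i)) = (\<Inter>j. closure (G j))"
proof (intro equalityI INT_greatest)
  show "(\<Inter>i. closure (F i)) \<subseteq> closure (G j)" for j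
    using assms(2)[of j] by (meson INT_lower UNIV_I closure_mono order_trans)
  show "(\<Inter>j. closure (G j)) \<subseteq> closure (F i)" for i
    using assms(1)[of i] by (meson INT_lower UNIV_I closure_mono order_trans)
qed

lemma omega_set_eq_limit_set: "omega_set z = limit_set (\<lambda>n. z (int n))"
  unfolding omega_set_def limit_set_def
proof (rule INT_closure_cofinal_eq)
  show "\<exists>j. (\<lambda>n. z (int n)) ` {j..} \<subseteq> {z n |n. M < n}" for M
    by (rule exI[of _ "nat (M + 1)"]) auto
  show "\<exists>M. {z n |n. M < n} \<subseteq> (\<lambda>n. z (int n)) ` {j..}" for j
    by (rule exI[of _ "int j - 1"]) (auto intro!: image_eqI[of _ _ "nat _"])
qed

lemma alpha_set_eq_limit_set: "alpha_set z = limit_set (\<lambda>n. z (- int n))"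
  unfolding alpha_set_def limit_set_def
proof (rule INT_closure_cofinal_eq)
  show "\<exists>j. (\<lambda>n. z (- int n)) ` {j..} \<subseteq> {z n |n. n < - M}" for M
    by (rule exI[of _ "nat (M + 1)"]) auto
  show "\<exists>M. {z n |n. n < - M} \<subseteq> (\<lambda>n. z (- int n)) ` {j..}" for j
    by (rule exI[of _ "int j - 1"]) (auto intro!: image_eqI[of _ _ "nat (- _)"])
qed

lemma limit_set_meets_cball:
  assumes "compact X" "range v \<subseteq> X" and frequently_close: "\<And>M. \<exists>m\<ge>M. dist a (v m) \<le> t"
  shows "\<exists>w\<in>limit_set v. dist a w \<le> t"
proof -
  have "(X \<inter> cball a t) \<inter> (\<Inter>M\<in>UNIV. closure (v ` {M..})) \<noteq> {}"
  proof (rule compact_imp_fip_image)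
    show "compact (X \<inter> cball a t)"
      using assms(1) by (simp add: compact_Int_closed)
    fix Ms :: "nat set" assume "finite Ms"
    obtain m where m: "m \<ge> Max (insert 0 Ms)" "dist a (v m) \<le> t"
      using frequently_close by blast
    then have "v m \<in> closure (v ` {M..})" if "M \<in> Ms" for M
      using \<open>finite Ms\<close> that by (intro closure_subset[THEN subsetD]) auto
    moreover have "v m \<in> X \<inter> cball a t"
      using m(2) assms(2) by (auto simp: dist_commute)
    ultimately show "X \<inter> cball a t \<inter> (\<Inter>M\<in>Ms. closure (v ` {M..})) \<noteq> {}"
      by (intro ex_in_conv[THEN iffD1] exI[of _ "v m"]) simp
  qed simp
  then show ?thesis
    unfolding limit_set_def by auto
qed

lemma hausdorff_dist_tails_infdist_less:
  fixes u v :: "nat \<Rightarrow> 'a::metric_space"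
  assumes "bounded (range v)" "closed A" "range u \<subseteq> A"
    and "hausdorff_dist (closure (v ` {N..})) (closure (u ` {N..})) < s" "w \<in> closure (v ` {N..})"
  shows "infdist w A < s"
proof -
  have "bounded (closure (v ` {N..}))"
    by (rule bounded_closure, rule bounded_subset[OF assms(1)]) auto
  then have "infdist w (closure (u ` {N..})) < s"
    using infdist_le_hausdorff_dist[OF _ assms(5)] assms(4) by (meson order.strict_trans1)
  moreover have "infdist w A \<le> infdist w (closure (u ` {N..}))"
    using assms(2,3) by (intro infdist_mono closure_minimal) auto
  ultimately show ?thesis by linarith
qed

lemma hausdorff_dist_tails_dist_less:
  fixes u v :: "nat \<Rightarrow> 'a::metric_space"
  assumes "bounded (range u)" "hausdorff_dist (closure (v ` {N..})) (closure (u ` {N..})) < s" "n \<ge> N"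
  shows "\<exists>m\<ge>N. dist (u n) (v m) < s"
proof -
  have "bounded (closure (u ` {N..}))"
    by (rule bounded_closure, rule bounded_subset[OF assms(1)]) auto
  moreover have "u n \<in> closure (u ` {N..})"
    using assms(3) by (auto intro: closure_subset[THEN subsetD])
  ultimately have "infdist (u n) (closure (v ` {N..})) \<le> hausdorff_dist (closure (v ` {N..})) (closure (u ` {N..}))"
    by (subst hausdorff_dist_commute) (rule infdist_le_hausdorff_dist)
  then have "infdist (u n) (v ` {N..}) < s"
    using assms(2) by (simp add: infdist_closure)
  then show ?thesis
    by (auto simp: infdist_less_iff)
qed

lemma hausdorff_dist_limit_set_le:
  fixes u v :: "nat \<Rightarrow> 'a::metric_space"
  assumes "compact X" "range v \<subseteq> X" "compact A" "range u \<subseteq> A"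
    and visits: "\<And>a M. a \<in> A \<Longrightarrow> \<exists>n\<ge>M. dist a (u n) < r"
    and shadows: "\<And>K. \<exists>N\<ge>K. hausdorff_dist (closure (v ` {N..})) (closure (u ` {N..})) < s"
  shows "hausdorff_dist (limit_set v) A \<le> r + s"
proof -
  have "bounded (range v)" "bounded (range u)"
    using assms(1-4) by (meson bounded_subset compact_imp_bounded)+
  have limit_set_near_A: "infdist w A < s" if "w \<in> limit_set v" for w
  proof -
    obtain N where "hausdorff_dist (closure (v ` {N..})) (closure (u ` {N..})) < s"
      using shadows by blast
    moreover have "w \<in> closure (v ` {N..})"
      using that by (auto simp: limit_set_def)
    ultimately show ?thesis
      using hausdorff_dist_tails_infdist_less \<open>bounded (range v)\<close> assms(3,4) compact_imp_closed by blast
  qed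
  have A_near_limit_set: "\<exists>w\<in>limit_set v. dist a w \<le> r + s" if "a \<in> A" for a
  proof (rule limit_set_meets_cball[OF assms(1,2)])
    fix M
    obtain N where "N \<ge> M" and N: "hausdorff_dist (closure (v ` {N..})) (closure (u ` {N..})) < s"
      using shadows by blast
    obtain n where "n \<ge> N" "dist a (u n) < r"
      using visits \<open>a \<in> A\<close> by blast
    moreover obtain m where "m \<ge> N" "dist (u n) (v m) < s"
      using hausdorff_dist_tails_dist_less[OF \<open>bounded (range u)\<close> N \<open>n \<ge> N\<close>] by blast
    ultimately show "\<exists>m\<ge>M. dist a (v m) \<le> r + s"
      using \<open>N \<ge> M\<close> dist_triangle[of a "v m" "u n"] by (auto intro!: exI[of _ m])
  qed
  have "0 < r"
    using visits[of "u 0" 0] assms(4) by (meson order.strict_trans1 rangeI subsetD zero_le_dist)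
  show ?thesis
  proof (rule hausdorff_dist_le)
    show "A \<noteq> {}" using assms(4) by blast
    then show "limit_set v \<noteq> {}" using A_near_limit_set by blast
    show "infdist w A \<le> r + s" if "w \<in> limit_set v" for w
      using limit_set_near_A[OF that] \<open>0 < r\<close> by linarith
    show "infdist a (limit_set v) \<le> r + s" if "a \<in> A" for a
      using A_near_limit_set[OF that] infdist_le2 by blast
  qed
qed

lemma forward_tail_eq: "{z (int N + int i) | i. True} = (\<lambda>n. z (int n)) ` {N..}"
  unfolding image_add_atLeast[of N 0, simplified, symmetric] image_image by auto

lemma backward_tail_eq: "{z (- int i - int N) | i. True} = (\<lambda>n. z (- int n)) ` {N..}"
  unfolding image_add_atLeast[of N 0, simplified, symmetric] image_image by (auto simp: algebra_simps)

definition cofinally_shadows :: "real \<Rightarrow> (int \<Rightarrow> 'a::metric_space) \<Rightarrow> (int \<Rightarrow> 'a) \<Rightarrow> bool" where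
  "cofinally_shadows \<epsilon> z x \<longleftrightarrow> (\<forall>K. \<exists>N\<ge>K.
     hausdorff_dist (closure ((\<lambda>n. z (int n)) ` {N..})) (closure ((\<lambda>n. x (int n)) ` {N..})) < \<epsilon> \<and>
     hausdorff_dist (closure ((\<lambda>n. z (- int n)) ` {N..})) (closure ((\<lambda>n. x (- int n)) ` {N..})) < \<epsilon>)"

lemma two_sided_cofinal_orbital_shadowingD:
  assumes "two_sided_cofinal_orbital_shadowing X f" "\<epsilon> > 0"
  obtains \<delta> where "\<delta> > 0"
    "\<And>x. two_sided_pseudo_orbit X f \<delta> x \<Longrightarrow> \<exists>z. full_trajectory X f z \<and> cofinally_shadows \<epsilon> z x"
  using assms[unfolded two_sided_cofinal_orbital_shadowing_def forward_tail_eq backward_tail_eq]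
  unfolding cofinally_shadows_def by (elim allE[of _ \<epsilon>] impE exE conjE) auto

lemma hausdorff_dist_limit_sets_le:
  fixes x z :: "int \<Rightarrow> 'a::metric_space"
  assumes "compact X" "\<And>i. z i \<in> X" "compact A" "\<And>i. x i \<in> A"
    and "\<And>a M. a \<in> A \<Longrightarrow> \<exists>n\<ge>M. dist a (x (int n)) < r"
    and "\<And>a M. a \<in> A \<Longrightarrow> \<exists>n\<ge>M. dist a (x (- int n)) < r"
    and "cofinally_shadows s z x"
  shows "hausdorff_dist (omega_set z) A \<le> r + s" "hausdorff_dist (alpha_set z) A \<le> r + s"
proof -
  have zX: "range (\<lambda>n. z (int n)) \<subseteq> X" "range (\<lambda>n. z (- int n)) \<subseteq> X"
    using assms(2) by auto
  have xA: "range (\<lambda>n. x (int n)) \<subseteq> A" "range (\<lambda>n. x (- int n)) \<subseteq> A"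
    using assms(4) by auto
  have shadows:
    "\<And>K. \<exists>N\<ge>K. hausdorff_dist (closure ((\<lambda>n. z (int n)) ` {N..})) (closure ((\<lambda>n. x (int n)) ` {N..})) < s"
    "\<And>K. \<exists>N\<ge>K. hausdorff_dist (closure ((\<lambda>n. z (- int n)) ` {N..})) (closure ((\<lambda>n. x (- int n)) ` {N..})) < s"
    using assms(7) unfolding cofinally_shadows_def by meson+
  show "hausdorff_dist (omega_set z) A \<le> r + s"
    unfolding omega_set_eq_limit_set
    by (rule hausdorff_dist_limit_set_le[OF assms(1) zX(1) assms(3) xA(1) assms(5) shadows(1)])
  show "hausdorff_dist (alpha_set z) A \<le> r + s"
    unfolding alpha_set_eq_limit_set
    by (rule hausdorff_dist_limit_set_le[OF assms(1) zX(2) assms(3) xA(2) assms(6) shadows(2)])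
qed

definition delta_chain :: "('a::metric_space \<Rightarrow> 'a) \<Rightarrow> 'a set \<Rightarrow> real \<Rightarrow> nat \<Rightarrow> (nat \<Rightarrow> 'a) \<Rightarrow> bool" where
  "delta_chain f A \<delta> N c \<longleftrightarrow> (\<forall>i\<le>N. c i \<in> A) \<and> (\<forall>i<N. dist (f (c i)) (c (Suc i)) < \<delta>)"

lemma delta_chain_append:
  assumes c: "delta_chain f A \<delta> N c" and d: "delta_chain f A \<delta> M d" and "c N = d 0"
  shows "delta_chain f A \<delta> (N + M) (\<lambda>i. if i \<le> N then c i else d (i - N))"
proof -
  have join: "(if i \<le> N then c i else d (i - N)) = d (i - N)" if "N \<le> i" for i
    using that \<open>c N = d 0\<close> by auto
  show ?thesis
    unfolding delta_chain_def
  proof (intro conjI allI impI)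
    show "(if i \<le> N then c i else d (i - N)) \<in> A" if "i \<le> N + M" for i
      using c d that by (auto simp: delta_chain_def)
    show "dist (f (if i \<le> N then c i else d (i - N))) (if Suc i \<le> N then c (Suc i) else d (Suc i - N)) < \<delta>"
      if "i < N + M" for i
    proof (cases "i < N")
      case True
      then show ?thesis using c by (simp add: delta_chain_def)
    next
      case False
      then have "Suc i - N = Suc (i - N)" "i - N < M"
        using that by auto
      then show ?thesis using d False join[of i] by (simp add: delta_chain_def)
    qed
  qed
qed

lemma internally_chain_transitiveD:
  "internally_chain_transitive f A \<Longrightarrow> a \<in> A \<Longrightarrow> b \<in> A \<Longrightarrow> \<delta> > 0 \<Longrightarrow>
    \<exists>N c. N \<ge> 1 \<and> c 0 = a \<and> c N = b \<and> delta_chain f A \<delta> N c"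
  unfolding internally_chain_transitive_def delta_chain_def by blast

lemma closed_delta_chain_through:
  assumes "internally_chain_transitive f A" "\<delta> > 0" "a \<in> A" "finite S" "S \<subseteq> A"
  shows "\<exists>N c. N \<ge> 1 \<and> c 0 = a \<and> c N = a \<and> delta_chain f A \<delta> N c \<and> S \<subseteq> c ` {..<N}"
  using assms(4,5)
proof (induction S rule: finite_induct)
  case empty
  then show ?case using internally_chain_transitiveD[OF assms(1,3,3,2)] by blast
next
  case (insert s S)
  then obtain N c where c: "N \<ge> 1" "c 0 = a" "c N = a" "delta_chain f A \<delta> N c" "S \<subseteq> c ` {..<N}"
    by auto
  obtain M d where d: "M \<ge> 1" "d 0 = a" "d M = s" "delta_chain f A \<delta> M d"
    using internally_chain_transitiveD[OF assms(1,3) _ assms(2), of s] insert.prems by auto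
  obtain L e where e: "L \<ge> 1" "e 0 = s" "e L = a" "delta_chain f A \<delta> L e"
    using internally_chain_transitiveD[OF assms(1) _ assms(3,2), of s] insert.prems by auto
  define cd where "cd = (\<lambda>i. if i \<le> N then c i else d (i - N))"
  define cde where "cde = (\<lambda>i. if i \<le> N + M then cd i else e (i - (N + M)))"
  have "delta_chain f A \<delta> (N + M) cd"
    unfolding cd_def using c d by (intro delta_chain_append) auto
  then have "delta_chain f A \<delta> (N + M + L) cde"
    unfolding cde_def using c d e by (intro delta_chain_append) (auto simp: cd_def)
  moreover have "cde 0 = a" "cde (N + M + L) = a"
    using c d e by (auto simp: cde_def cd_def)
  moreover have "insert s S \<subseteq> cde ` {..<N + M + L}"
  proof -
    have "cde (N + M) = s"
      using c d by (simp add: cde_def cd_def)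
    then have "s \<in> cde ` {..<N + M + L}"
      using e(1) by (intro image_eqI[of _ _ "N + M"]) auto
    moreover have "c j \<in> cde ` {..<N + M + L}" if "j < N" for j
      using that by (intro image_eqI[of _ _ j]) (auto simp: cde_def cd_def)
    ultimately show ?thesis
      using c(5) by blast
  qed
  ultimately show ?case
    by (intro exI[of _ "N + M + L"] exI[of _ cde]) auto
qed

lemma periodic_extension_step:
  assumes "delta_chain f A \<delta> P c" "P \<ge> 1" "c P = c 0"
  shows "c (nat (i mod int P)) \<in> A" "dist (f (c (nat (i mod int P)))) (c (nat ((i + 1) mod int P))) < \<delta>"
proof -
  define j where "j = nat (i mod int P)"
  have "j < P"
    using assms(2) by (simp add: j_def nat_less_iff)
  have "(i + 1) mod int P = (int j + 1) mod int P"
    using assms(2) by (simp add: j_def mod_add_left_eq)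
  also have "\<dots> = int (Suc j mod P)"
    by (simp add: zmod_int add.commute)
  finally have "c (nat ((i + 1) mod int P)) = c (Suc j)"
    using \<open>j < P\<close> assms(3) by (cases "Suc j = P") (auto simp: nat_add_distrib)
  then show "c (nat (i mod int P)) \<in> A" "dist (f (c (nat (i mod int P)))) (c (nat ((i + 1) mod int P))) < \<delta>"
    using assms(1) \<open>j < P\<close> by (auto simp: delta_chain_def j_def[symmetric])
qed

lemma residue_recurs:
  fixes j P M :: nat
  assumes "j < P"
  shows "\<exists>n\<ge>M. nat (int n mod int P) = j" and "\<exists>n\<ge>M. nat (- int n mod int P) = j"
proof -
  have M_le: "M \<le> M * P + k" for k
    using assms by (intro trans_le_add1) simp
  show "\<exists>n\<ge>M. nat (int n mod int P) = j"
    using assms by (intro exI[of _ "M * P + j"] conjI M_le) (simp flip: zmod_int)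
  have "- int (M * P + (P - j)) = int j + (- int M - 1) * int P"
    using assms by (simp add: of_nat_diff algebra_simps)
  then have "- int (M * P + (P - j)) mod int P = int j mod int P"
    by (simp only: mod_mult_self1)
  then show "\<exists>n\<ge>M. nat (- int n mod int P) = j"
    using assms by (intro exI[of _ "M * P + (P - j)"] conjI M_le) simp
qed

lemma ict_pseudo_orbit_recurrently_near:
  assumes "internally_chain_transitive f A" "compact A" "A \<noteq> {}" "\<delta> > 0" "r > 0"
  obtains x :: "int \<Rightarrow> 'a::metric_space"
  where "\<And>i. x i \<in> A" "\<And>i. dist (f (x i)) (x (i + 1)) < \<delta>"
    "\<And>a M. a \<in> A \<Longrightarrow> \<exists>n\<ge>M. dist a (x (int n)) < r"
    "\<And>a M. a \<in> A \<Longrightarrow> \<exists>n\<ge>M. dist a (x (- int n)) < r"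
proof -
  obtain S where S: "finite S" "S \<subseteq> A" "A \<subseteq> (\<Union>s\<in>S. ball s r)"
    using seq_compact_imp_totally_bounded[OF compact_imp_seq_compact[OF assms(2)]] assms(5) by meson
  obtain a where "a \<in> A"
    using assms(3) by blast
  then obtain P c where c: "P \<ge> 1" "c 0 = a" "c P = a" "delta_chain f A \<delta> P c" "S \<subseteq> c ` {..<P}"
    using closed_delta_chain_through[OF assms(1,4) _ S(1,2)] by blast
  define x where "x i = c (nat (i mod int P))" for i
  have near_net: "\<exists>j<P. dist b (c j) < r" if b: "b \<in> A" for b
  proof -
    obtain s where "s \<in> S" "b \<in> ball s r"
      using S(3) b by blast
    moreover obtain j where "j < P" "s = c j"
      using c(5) \<open>s \<in> S\<close> by auto
    ultimately show ?thesis
      by (auto simp: dist_commute)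
  qed
  show ?thesis
  proof
    show "x i \<in> A" "dist (f (x i)) (x (i + 1)) < \<delta>" for i
      unfolding x_def using periodic_extension_step[OF c(4,1)] c(2,3) by simp_all
  next
    fix b M assume "b \<in> A"
    then obtain j where "j < P" "dist b (c j) < r"
      using near_net by blast
    moreover obtain n n' where "n \<ge> M" "x (int n) = c j" "n' \<ge> M" "x (- int n') = c j"
      using residue_recurs[OF \<open>j < P\<close>] unfolding x_def by metis
    ultimately show "\<exists>n\<ge>M. dist b (x (int n)) < r" "\<exists>n\<ge>M. dist b (x (- int n)) < r"
      by auto
  qed
qed

theorem mainTheorem7:
  fixes X :: "'a::metric_space set" and f :: "'a \<Rightarrow> 'a"
  assumes "compact X" and "continuous_on X f" and "f ` X \<subseteq> X"
    and "two_sided_cofinal_orbital_shadowing X f"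
  shows "property_Pa X f"
  unfolding property_Pa_def
proof (intro ballI allI impI)
  fix A and e :: real
  assume "A \<in> ICT X f" "e > 0"
  then have A: "A \<subseteq> X" "A \<noteq> {}" "closed A" "internally_chain_transitive f A"
    by (auto simp: ICT_def)
  have "compact A"
    using compact_Int_closed[OF assms(1) A(3)] A(1) by (simp add: Int_absorb1)
  obtain \<delta> where "\<delta> > 0" and shadowing:
    "\<And>x. two_sided_pseudo_orbit X f \<delta> x \<Longrightarrow> \<exists>z. full_trajectory X f z \<and> cofinally_shadows (e/2) z x"
    using two_sided_cofinal_orbital_shadowingD[OF assms(4), of "e/2"] \<open>e > 0\<close> by auto
  obtain x where x: "\<And>i. x i \<in> A" "\<And>i. dist (f (x i)) (x (i + 1)) < \<delta>"
    "\<And>a M. a \<in> A \<Longrightarrow> \<exists>n\<ge>M. dist a (x (int n)) < e/4"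
    "\<And>a M. a \<in> A \<Longrightarrow> \<exists>n\<ge>M. dist a (x (- int n)) < e/4"
    using ict_pseudo_orbit_recurrently_near[OF A(4) \<open>compact A\<close> A(2) \<open>\<delta> > 0\<close>, of "e/4"] \<open>e > 0\<close> by auto
  then have "two_sided_pseudo_orbit X f \<delta> x"
    using A(1) by (auto simp: two_sided_pseudo_orbit_def)
  then obtain z where z: "full_trajectory X f z" "cofinally_shadows (e/2) z x"
    using shadowing by blast
  have "\<And>i. z i \<in> X"
    using z(1) by (simp add: full_trajectory_def)
  note bounds = hausdorff_dist_limit_sets_le[OF assms(1) this \<open>compact A\<close> x(1,3,4) z(2)]
  show "\<exists>z. full_trajectory X f z \<and> hausdorff_dist (alpha_set z) A < e \<and> hausdorff_dist (omega_set z) A < e"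
    using z(1) bounds \<open>e > 0\<close> by (intro exI[of _ z]) auto
qed

end
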